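(* Let $C$ be a cofibrant object of a P-category $(\mathcal{C},P,\mathcal{F},\mathcal{W})$. Every weak equivalence $w:A\to B$ of $\mathcal{C}$ induces a bijection $w_*:[C,A]\to[C,B]$, $[f]\mapsto[wf]$, where $[C,X]=\mathcal{C}(C,X)/\simeq$.
   Context: Let $\mathcal{C}$ be a category with finite products and a final object $e$. A functorial path is a functor $P:\mathcal{C}\to\mathcal{C}$ with natural transformations $\iota:1\to P$, $\delta^0,\delta^1:P\to1$, $\delta^0\iota=\delta^1\iota=1$; a homotopy $h:f\simeq g$ between $f,g:A\to B$ is $h:A\to P(B)$ with $\delta^0_Bh=f$, $\delta^1_Bh=g$ (for $C$ cofibrant this is an equivalence relation on $\mathcal{C}(C,X)$). The path is equipped with a symmetry $\tau$ (natural automorphism of $P$, $\tau\tau=1$, $\tau\iota=\iota$, $\delta^k\tau=\delta^{1-k}$), a coproduct $c:P\to P^2$ ($c_{P(A)}c_A=P(c_A)c_A$, $\delta^1_{P(A)}c_A=P(\delta^1_A)c_A=1$, $c_A\iota_A=\iota_{P(A)}\iota_A$, $\delta^0_{P(A)}c_A=P(\delta^0_A)c_A=\iota_A\delta^0_A$), an interchange $\mu$ (natural automorphism of $P^2$, $\delta^k_{P(A)}\mu_A=P(\delta^k_A)$, $P(\delta^k_A)\mu_A=\delta^k_{P(A)}$) and a folding map $\nabla:P^2\to P$ ($\delta^k_A\nabla_A=\delta^k_A\delta^k_{P(A)}$, $\nabla_A\iota_{P(A)}=1$). A P-category has classes $\mathcal{F}$ (fibrations), $\mathcal{W}$ (weak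 equivalences) with: (P$_1$) both contain isomorphisms and are closed under composition, $\mathcal{W}$ satisfies 2-out-of-3, each $A\to e$ is a fibration; (P$_2$) $\iota_A\in\mathcal{W}$, $(\delta^0_A,\delta^1_A)$ is a fibration, $\delta^0_A,\delta^1_A$ are trivial fibrations; (P$_3$) pullbacks along fibrations exist, the pulled-back map is a (trivial) fibration if the original is, and the other projection is a weak equivalence if the map pulled back along is; (P$_4$) $P$ preserves fibrations, weak equivalences and fibre products; (P$_5$) for each fibration $v:A\to B$ the map $((\delta^0_A,\delta^1_A),P(v)):P(A)\to(A\times A)\times_{B\times B}P(B)$ is a fibration. An object $C$ is cofibrant if for every trivial fibration $w:A\to B$ and every $f:C\to B$ there is $g:C\to A$ with $wg=f$. *)

theory Defs
  imports Main
begin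

text \<open>Objects have type 'o, arrows type 'a.
  cmp K g f denotes the composite g f (first f, then g).\<close>

record ('o, 'a) pcat =
  ob  :: "'o set"
  ar  :: "'a set"
  src :: "'a \<Rightarrow> 'o"
  tgt :: "'a \<Rightarrow> 'o"
  cmp :: "'a \<Rightarrow> 'a \<Rightarrow> 'a"
  idt :: "'o \<Rightarrow> 'a"
  prd :: "'o \<Rightarrow> 'o \<Rightarrow> 'o"
  pr1 :: "'o \<Rightarrow> 'o \<Rightarrow> 'a"
  pr2 :: "'o \<Rightarrow> 'o \<Rightarrow> 'a"
  tup :: "'a \<Rightarrow> 'a \<Rightarrow> 'a"
  fin :: "'o"
  trm :: "'o \<Rightarrow> 'a"
  Po  :: "'o \<Rightarrow> 'o"
  Pa  :: "'a \<Rightarrow> 'a"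
  iota :: "'o \<Rightarrow> 'a"
  d0  :: "'o \<Rightarrow> 'a"
  d1  :: "'o \<Rightarrow> 'a"
  tau :: "'o \<Rightarrow> 'a"
  cop :: "'o \<Rightarrow> 'a"
  mu  :: "'o \<Rightarrow> 'a"
  nab :: "'o \<Rightarrow> 'a"
  fib :: "'a set"
  weq :: "'a set"

definition hom :: "('o,'a) pcat \<Rightarrow> 'o \<Rightarrow> 'o \<Rightarrow> 'a set" where
  "hom K X Y = {f \<in> ar K. src K f = X \<and> tgt K f = Y}"

definition is_category :: "('o,'a) pcat \<Rightarrow> bool" where
  "is_category K \<longleftrightarrow>
     (\<forall>f\<in>ar K. src K f \<in> ob K \<and> tgt K f \<in> ob K)
   \<and> (\<forall>X\<in>ob K. idt K X \<in> hom K X X)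
   \<and> (\<forall>f\<in>ar K. \<forall>g\<in>ar K. tgt K f = src K g \<longrightarrow> cmp K g f \<in> hom K (src K f) (tgt K g))
   \<and> (\<forall>f\<in>ar K. cmp K (idt K (tgt K f)) f = f \<and> cmp K f (idt K (src K f)) = f)
   \<and> (\<forall>f\<in>ar K. \<forall>g\<in>ar K. \<forall>h\<in>ar K. tgt K f = src K g \<longrightarrow> tgt K g = src K h \<longrightarrow>
        cmp K h (cmp K g f) = cmp K (cmp K h g) f)"

definition is_iso :: "('o,'a) pcat \<Rightarrow> 'a \<Rightarrow> bool" where
  "is_iso K f \<longleftrightarrow> f \<in> ar K \<and> (\<exists>g\<in>hom K (tgt K f) (src K f).
      cmp K g f = idt K (src K f) \<and> cmp K f g = idt K (tgt K f))"

definition has_finite_products :: "('o,'a) pcat \<Rightarrow> bool" where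
  "has_finite_products K \<longleftrightarrow>
     fin K \<in> ob K
   \<and> (\<forall>X\<in>ob K. trm K X \<in> hom K X (fin K) \<and> (\<forall>f\<in>hom K X (fin K). f = trm K X))
   \<and> (\<forall>A\<in>ob K. \<forall>B\<in>ob K. prd K A B \<in> ob K \<and> pr1 K A B \<in> hom K (prd K A B) A
        \<and> pr2 K A B \<in> hom K (prd K A B) B)
   \<and> (\<forall>A\<in>ob K. \<forall>B\<in>ob K. \<forall>X\<in>ob K. \<forall>f\<in>hom K X A. \<forall>g\<in>hom K X B.
        tup K f g \<in> hom K X (prd K A B) \<and> cmp K (pr1 K A B) (tup K f g) = f
        \<and> cmp K (pr2 K A B) (tup K f g) = g)
   \<and> (\<forall>A\<in>ob K. \<forall>B\<in>ob K. \<forall>X\<in>ob K. \<forall>h\<in>hom K X (prd K A B).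
        h = tup K (cmp K (pr1 K A B) h) (cmp K (pr2 K A B) h))"

definition prod_ar :: "('o,'a) pcat \<Rightarrow> 'a \<Rightarrow> 'a \<Rightarrow> 'a" where
  "prod_ar K f g = tup K (cmp K f (pr1 K (src K f) (src K g))) (cmp K g (pr2 K (src K f) (src K g)))"

text \<open>is_pullback K v f p q: the square with p : Q \<rightarrow> src f (the map v pulled back
  along f) and q : Q \<rightarrow> src v (the other projection), v q = f p, is a pullback.\<close>
definition is_pullback :: "('o,'a) pcat \<Rightarrow> 'a \<Rightarrow> 'a \<Rightarrow> 'a \<Rightarrow> 'a \<Rightarrow> bool" where
  "is_pullback K v f p q \<longleftrightarrow>
     v \<in> ar K \<and> f \<in> ar K \<and> tgt K f = tgt K v
   \<and> p \<in> hom K (src K p) (src K f) \<and> q \<in> hom K (src K p) (src K v)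
   \<and> cmp K v q = cmp K f p
   \<and> (\<forall>Z\<in>ob K. \<forall>a\<in>hom K Z (src K f). \<forall>b\<in>hom K Z (src K v). cmp K f a = cmp K v b \<longrightarrow>
        (\<exists>!u. u \<in> hom K Z (src K p) \<and> cmp K p u = a \<and> cmp K q u = b))"

definition is_functor_P :: "('o,'a) pcat \<Rightarrow> bool" where
  "is_functor_P K \<longleftrightarrow>
     (\<forall>X\<in>ob K. Po K X \<in> ob K \<and> Pa K (idt K X) = idt K (Po K X))
   \<and> (\<forall>f\<in>ar K. Pa K f \<in> hom K (Po K (src K f)) (Po K (tgt K f)))
   \<and> (\<forall>f\<in>ar K. \<forall>g\<in>ar K. tgt K f = src K g \<longrightarrow> Pa K (cmp K g f) = cmp K (Pa K g) (Pa K f))"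

definition nat_trans :: "('o,'a) pcat \<Rightarrow> ('o \<Rightarrow> 'o) \<Rightarrow> ('a \<Rightarrow> 'a) \<Rightarrow> ('o \<Rightarrow> 'o) \<Rightarrow> ('a \<Rightarrow> 'a)
     \<Rightarrow> ('o \<Rightarrow> 'a) \<Rightarrow> bool" where
  "nat_trans K F Fa G Ga eta \<longleftrightarrow>
     (\<forall>X\<in>ob K. eta X \<in> hom K (F X) (G X))
   \<and> (\<forall>f\<in>ar K. cmp K (Ga f) (eta (src K f)) = cmp K (eta (tgt K f)) (Fa f))"

definition path_structure :: "('o,'a) pcat \<Rightarrow> bool" where
  "path_structure K \<longleftrightarrow>
     is_functor_P K
   \<comment> \<open>iota, delta^0, delta^1\<close>
   \<and> nat_trans K id id (Po K) (Pa K) (iota K)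
   \<and> nat_trans K (Po K) (Pa K) id id (d0 K)
   \<and> nat_trans K (Po K) (Pa K) id id (d1 K)
   \<and> (\<forall>A\<in>ob K. cmp K (d0 K A) (iota K A) = idt K A \<and> cmp K (d1 K A) (iota K A) = idt K A)
   \<comment> \<open>symmetry tau\<close>
   \<and> nat_trans K (Po K) (Pa K) (Po K) (Pa K) (tau K)
   \<and> (\<forall>A\<in>ob K. cmp K (tau K A) (tau K A) = idt K (Po K A)
        \<and> cmp K (tau K A) (iota K A) = iota K A
        \<and> cmp K (d0 K A) (tau K A) = d1 K A \<and> cmp K (d1 K A) (tau K A) = d0 K A)
   \<comment> \<open>coproduct c\<close>
   \<and> nat_trans K (Po K) (Pa K) (Po K \<circ> Po K) (Pa K \<circ> Pa K) (cop K)
   \<and> (\<forall>A\<in>ob K.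
        cmp K (cop K (Po K A)) (cop K A) = cmp K (Pa K (cop K A)) (cop K A)
      \<and> cmp K (d1 K (Po K A)) (cop K A) = idt K (Po K A)
      \<and> cmp K (Pa K (d1 K A)) (cop K A) = idt K (Po K A)
      \<and> cmp K (cop K A) (iota K A) = cmp K (iota K (Po K A)) (iota K A)
      \<and> cmp K (d0 K (Po K A)) (cop K A) = cmp K (iota K A) (d0 K A)
      \<and> cmp K (Pa K (d0 K A)) (cop K A) = cmp K (iota K A) (d0 K A))
   \<comment> \<open>interchange mu (natural automorphism of P^2)\<close>
   \<and> nat_trans K (Po K \<circ> Po K) (Pa K \<circ> Pa K) (Po K \<circ> Po K) (Pa K \<circ> Pa K) (mu K)
   \<and> (\<forall>A\<in>ob K. is_iso K (mu K A)
        \<and> cmp K (d0 K (Po K A)) (mu K A) = Pa K (d0 K A)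
        \<and> cmp K (d1 K (Po K A)) (mu K A) = Pa K (d1 K A)
        \<and> cmp K (Pa K (d0 K A)) (mu K A) = d0 K (Po K A)
        \<and> cmp K (Pa K (d1 K A)) (mu K A) = d1 K (Po K A))
   \<comment> \<open>folding map nabla\<close>
   \<and> nat_trans K (Po K \<circ> Po K) (Pa K \<circ> Pa K) (Po K) (Pa K) (nab K)
   \<and> (\<forall>A\<in>ob K.
        cmp K (d0 K A) (nab K A) = cmp K (d0 K A) (d0 K (Po K A))
      \<and> cmp K (d1 K A) (nab K A) = cmp K (d1 K A) (d1 K (Po K A))
      \<and> cmp K (nab K A) (iota K (Po K A)) = idt K (Po K A))"

definition P_axioms :: "('o,'a) pcat \<Rightarrow> bool" where
  "P_axioms K \<longleftrightarrow>
   \<comment> \<open>(P1)\<close>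
     fib K \<subseteq> ar K \<and> weq K \<subseteq> ar K
   \<and> (\<forall>f. is_iso K f \<longrightarrow> f \<in> fib K \<and> f \<in> weq K)
   \<and> (\<forall>f\<in>fib K. \<forall>g\<in>fib K. tgt K f = src K g \<longrightarrow> cmp K g f \<in> fib K)
   \<and> (\<forall>f\<in>ar K. \<forall>g\<in>ar K. tgt K f = src K g \<longrightarrow>
        ((f \<in> weq K \<and> g \<in> weq K \<longrightarrow> cmp K g f \<in> weq K)
       \<and> (f \<in> weq K \<and> cmp K g f \<in> weq K \<longrightarrow> g \<in> weq K)
       \<and> (g \<in> weq K \<and> cmp K g f \<in> weq K \<longrightarrow> f \<in> weq K)))
   \<and> (\<forall>A\<in>ob K. trm K A \<in> fib K)
   \<comment> \<open>(P2)\<close>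
   \<and> (\<forall>A\<in>ob K. iota K A \<in> weq K
        \<and> tup K (d0 K A) (d1 K A) \<in> fib K
        \<and> d0 K A \<in> fib K \<and> d0 K A \<in> weq K
        \<and> d1 K A \<in> fib K \<and> d1 K A \<in> weq K)
   \<comment> \<open>(P3)\<close>
   \<and> (\<forall>v\<in>fib K. \<forall>f\<in>ar K. tgt K f = tgt K v \<longrightarrow>
        (\<exists>p q. is_pullback K v f p q)
      \<and> (\<forall>p q. is_pullback K v f p q \<longrightarrow>
           p \<in> fib K \<and> (v \<in> weq K \<longrightarrow> p \<in> weq K) \<and> (f \<in> weq K \<longrightarrow> q \<in> weq K)))
   \<comment> \<open>(P4)\<close>
   \<and> (\<forall>v\<in>fib K. Pa K v \<in> fib K)
   \<and> (\<forall>w\<in>weq K. Pa K w \<in> weq K)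
   \<and> (\<forall>v\<in>fib K. \<forall>f p q. is_pullback K v f p q \<longrightarrow>
        is_pullback K (Pa K v) (Pa K f) (Pa K p) (Pa K q))
   \<comment> \<open>(P5)\<close>
   \<and> (\<forall>v\<in>fib K. \<forall>p q u.
        is_pullback K (tup K (d0 K (tgt K v)) (d1 K (tgt K v))) (prod_ar K v v) p q
      \<and> u \<in> hom K (Po K (src K v)) (src K p)
      \<and> cmp K p u = tup K (d0 K (src K v)) (d1 K (src K v))
      \<and> cmp K q u = Pa K v
      \<longrightarrow> u \<in> fib K)"

definition P_category :: "('o,'a) pcat \<Rightarrow> bool" where
  "P_category K \<longleftrightarrow> is_category K \<and> has_finite_products K \<and> path_structure K \<and> P_axioms K"

definition cofibrant :: "('o,'a) pcat \<Rightarrow> 'o \<Rightarrow> bool" where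
  "cofibrant K C \<longleftrightarrow> C \<in> ob K \<and>
     (\<forall>w A B f. w \<in> fib K \<and> w \<in> weq K \<and> w \<in> hom K A B \<and> f \<in> hom K C B \<longrightarrow>
        (\<exists>g\<in>hom K C A. cmp K w g = f))"

definition htpy_rel :: "('o,'a) pcat \<Rightarrow> 'o \<Rightarrow> 'o \<Rightarrow> ('a \<times> 'a) set" where
  "htpy_rel K C X = {(f, g). f \<in> hom K C X \<and> g \<in> hom K C X \<and>
     (\<exists>h\<in>hom K C (Po K X). cmp K (d0 K X) h = f \<and> cmp K (d1 K X) h = g)}"

definition htpy_classes :: "('o,'a) pcat \<Rightarrow> 'o \<Rightarrow> 'o \<Rightarrow> 'a set set" where
  "htpy_classes K C X = hom K C X // htpy_rel K C X"

end

theory Submission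
  imports Defs
begin

text \<open>A weak equivalence w : A \<rightarrow> B factors through its mapping path space R as
  w = t s, where t : R \<rightarrow> B is a trivial fibration, s is a section of the projection
  \<pi> : R \<rightarrow> A, and w \<pi> is homotopic to t. Since C is cofibrant, maps C \<rightarrow> B lift
  along t, which gives surjectivity. Axiom (P5) makes the map induced by a
  trivial fibration on path objects again a trivial fibration, so homotopies of maps
  out of C lift along trivial fibrations; lifting along s and projecting with \<pi> gives
  injectivity, and lifting along d1 gives transitivity of the homotopy relation.\<close>

lemma bij_betw_quotients_induced:
  assumes R: "equiv X R" and S: "equiv Y S"
    and maps: "\<And>x. x \<in> X \<Longrightarrow> \<phi> x \<in> Y"
    and reflects: "\<And>x x'. x \<in> X \<Longrightarrow> x' \<in> X \<Longrightarrow> (\<phi> x, \<phi> x') \<in> S \<longleftrightarrow> (x, x') \<in> R"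
    and surj: "\<And>y. y \<in> Y \<Longrightarrow> \<exists>x\<in>X. (\<phi> x, y) \<in> S"
  shows "\<exists>F. bij_betw F (X // R) (Y // S) \<and> (\<forall>x\<in>X. F (R `` {x}) = S `` {\<phi> x})"
proof -
  define F where "F c = (\<Union>x\<in>c. S `` {\<phi> x})" for c
  have "(\<lambda>x. S `` {\<phi> x}) respects R"
  proof (rule congruentI)
    fix x x' assume "(x, x') \<in> R"
    with R have "x \<in> X" "x' \<in> X" "(x, x') \<in> R" by (auto dest: equiv_type)
    with S maps reflects show "S `` {\<phi> x} = S `` {\<phi> x'}" by (simp add: equiv_class_eq)
  qed
  then have F_class: "F (R `` {x}) = S `` {\<phi> x}" if "x \<in> X" for x
    unfolding F_def using UN_equiv_class[OF R _ that] by blast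
  have "inj_on F (X // R)"
  proof (rule inj_onI)
    fix c c' assume "c \<in> X // R" "c' \<in> X // R" "F c = F c'"
    then obtain x x' where "x \<in> X" "x' \<in> X" "c = R `` {x}" "c' = R `` {x'}"
      "S `` {\<phi> x} = S `` {\<phi> x'}"
      by (metis F_class quotientE)
    with R S maps reflects show "c = c'"
      by (metis eq_equiv_class_iff)
  qed
  moreover have "F ` (X // R) = Y // S"
  proof
    show "F ` (X // R) \<subseteq> Y // S"
    proof
      fix d assume "d \<in> F ` (X // R)"
      then obtain x where "x \<in> X" "d = F (R `` {x})" by (auto elim!: quotientE)
      then show "d \<in> Y // S" using F_class maps quotientI by metis
    qed
    show "Y // S \<subseteq> F ` (X // R)"
    proof
      fix d assume "d \<in> Y // S"
      then obtain y where y: "y \<in> Y" "d = S `` {y}" by (rule quotientE)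
      then obtain x where "x \<in> X" "(\<phi> x, y) \<in> S" using surj by blast
      with S y have "d = F (R `` {x})" by (simp add: F_class equiv_class_eq)
      with \<open>x \<in> X\<close> show "d \<in> F ` (X // R)" by (blast intro: quotientI)
    qed
  qed
  ultimately show ?thesis using F_class unfolding bij_betw_def by blast
qed

locale p_category =
  fixes K :: "('o, 'a) pcat" (structure)
  assumes P_category: "P_category K"
begin

abbreviation comp (infixr "\<cdot>" 55) where "g \<cdot> f \<equiv> cmp K g f"

lemma is_cat: "is_category K" and has_products: "has_finite_products K"
  and has_paths: "path_structure K" and P_ax: "P_axioms K"
  using P_category unfolding P_category_def by auto

lemma homD: "f \<in> hom K X Y \<Longrightarrow> f \<in> ar K \<and> src K f = X \<and> tgt K f = Y"
  by (simp add: hom_def)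

lemma hom_ob: "f \<in> hom K X Y \<Longrightarrow> X \<in> ob K \<and> Y \<in> ob K"
  using is_cat unfolding is_category_def hom_def by auto

lemma comp_hom: "f \<in> hom K X Y \<Longrightarrow> g \<in> hom K Y Z \<Longrightarrow> g \<cdot> f \<in> hom K X Z"
  using is_cat unfolding is_category_def hom_def by auto

lemma assoc: "f \<in> hom K X Y \<Longrightarrow> g \<in> hom K Y Z \<Longrightarrow> h \<in> hom K Z W \<Longrightarrow>
    h \<cdot> (g \<cdot> f) = (h \<cdot> g) \<cdot> f"
  using is_cat unfolding is_category_def hom_def by auto

lemma id_hom: "X \<in> ob K \<Longrightarrow> idt K X \<in> hom K X X"
  using is_cat unfolding is_category_def by auto

lemma id_left: "f \<in> hom K X Y \<Longrightarrow> idt K Y \<cdot> f = f"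
  using is_cat unfolding is_category_def hom_def by auto

lemma id_right: "f \<in> hom K X Y \<Longrightarrow> f \<cdot> idt K X = f"
  using is_cat unfolding is_category_def hom_def by auto

lemma trm_hom: "X \<in> ob K \<Longrightarrow> trm K X \<in> hom K X (fin K)"
  using has_products unfolding has_finite_products_def by auto

lemma trm_unique: "f \<in> hom K X (fin K) \<Longrightarrow> f = trm K X"
  using has_products hom_ob unfolding has_finite_products_def by blast

lemma pr1_hom: "A \<in> ob K \<Longrightarrow> B \<in> ob K \<Longrightarrow> pr1 K A B \<in> hom K (prd K A B) A"
  using has_products unfolding has_finite_products_def by auto

lemma pr2_hom: "A \<in> ob K \<Longrightarrow> B \<in> ob K \<Longrightarrow> pr2 K A B \<in> hom K (prd K A B) B"
  using has_products unfolding has_finite_products_def by auto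

lemma tup_hom: "f \<in> hom K X A \<Longrightarrow> g \<in> hom K X B \<Longrightarrow> tup K f g \<in> hom K X (prd K A B)"
  using has_products hom_ob unfolding has_finite_products_def by blast

lemma pr1_tup: "f \<in> hom K X A \<Longrightarrow> g \<in> hom K X B \<Longrightarrow> pr1 K A B \<cdot> tup K f g = f"
  using has_products hom_ob unfolding has_finite_products_def by blast

lemma pr2_tup: "f \<in> hom K X A \<Longrightarrow> g \<in> hom K X B \<Longrightarrow> pr2 K A B \<cdot> tup K f g = g"
  using has_products hom_ob unfolding has_finite_products_def by blast

lemma tup_eta: "A \<in> ob K \<Longrightarrow> B \<in> ob K \<Longrightarrow> h \<in> hom K X (prd K A B) \<Longrightarrow>
    h = tup K (pr1 K A B \<cdot> h) (pr2 K A B \<cdot> h)"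
  using has_products hom_ob unfolding has_finite_products_def by blast

lemma tup_eqI:
  assumes "A \<in> ob K" "B \<in> ob K" "h \<in> hom K X (prd K A B)" "h' \<in> hom K X (prd K A B)"
    and "pr1 K A B \<cdot> h = pr1 K A B \<cdot> h'" "pr2 K A B \<cdot> h = pr2 K A B \<cdot> h'"
  shows "h = h'"
  using tup_eta[OF assms(1-3)] tup_eta[OF assms(1,2,4)] assms(5,6) by simp

lemma tup_inject:
  assumes "f \<in> hom K X A" "g \<in> hom K X B" "f' \<in> hom K X A" "g' \<in> hom K X B"
    and "tup K f g = tup K f' g'"
  shows "f = f'" "g = g'"
  using pr1_tup[OF assms(1,2)] pr1_tup[OF assms(3,4)] pr2_tup[OF assms(1,2)] pr2_tup[OF assms(3,4)]
    assms(5) by metis+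

lemma tup_comp:
  assumes f: "f \<in> hom K X A" and g: "g \<in> hom K X B" and h: "h \<in> hom K W X"
  shows "tup K f g \<cdot> h = tup K (f \<cdot> h) (g \<cdot> h)"
proof -
  have AB: "A \<in> ob K" "B \<in> ob K" using f g hom_ob by auto
  have t: "tup K f g \<in> hom K X (prd K A B)" using tup_hom f g by auto
  have "pr1 K A B \<cdot> (tup K f g \<cdot> h) = f \<cdot> h"
    using assoc[OF h t pr1_hom[OF AB]] pr1_tup[OF f g] by simp
  moreover have "pr2 K A B \<cdot> (tup K f g \<cdot> h) = g \<cdot> h"
    using assoc[OF h t pr2_hom[OF AB]] pr2_tup[OF f g] by simp
  ultimately show ?thesis using tup_eta[OF AB comp_hom[OF h t]] by simp
qed

lemma prod_ar_hom:
  assumes f: "f \<in> hom K X Y" and g: "g \<in> hom K X' Y'"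
  shows "prod_ar K f g \<in> hom K (prd K X X') (prd K Y Y')"
    and "pr1 K Y Y' \<cdot> prod_ar K f g = f \<cdot> pr1 K X X'"
    and "pr2 K Y Y' \<cdot> prod_ar K f g = g \<cdot> pr2 K X X'"
proof -
  have XX': "X \<in> ob K" "X' \<in> ob K" using f g hom_ob by auto
  have src: "src K f = X" "src K g = X'" using f g homD by auto
  have a: "f \<cdot> pr1 K X X' \<in> hom K (prd K X X') Y" using comp_hom[OF pr1_hom[OF XX'] f] .
  have b: "g \<cdot> pr2 K X X' \<in> hom K (prd K X X') Y'" using comp_hom[OF pr2_hom[OF XX'] g] .
  show "prod_ar K f g \<in> hom K (prd K X X') (prd K Y Y')"
    unfolding prod_ar_def src using tup_hom[OF a b] .
  show "pr1 K Y Y' \<cdot> prod_ar K f g = f \<cdot> pr1 K X X'"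
    unfolding prod_ar_def src using pr1_tup[OF a b] .
  show "pr2 K Y Y' \<cdot> prod_ar K f g = g \<cdot> pr2 K X X'"
    unfolding prod_ar_def src using pr2_tup[OF a b] .
qed

lemma prod_ar_tup:
  assumes f: "f \<in> hom K X Y" and g: "g \<in> hom K X' Y'" and x: "x \<in> hom K W X" and y: "y \<in> hom K W X'"
  shows "prod_ar K f g \<cdot> tup K x y = tup K (f \<cdot> x) (g \<cdot> y)"
proof -
  have XX': "X \<in> ob K" "X' \<in> ob K" using f g hom_ob by auto
  have xy: "tup K x y \<in> hom K W (prd K X X')" using tup_hom[OF x y] .
  have "pr1 K Y Y' \<cdot> (prod_ar K f g \<cdot> tup K x y) = f \<cdot> x"
    using assoc[OF xy prod_ar_hom(1)[OF f g] pr1_hom] assoc[OF xy pr1_hom[OF XX'] f]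
      prod_ar_hom(2)[OF f g] pr1_tup[OF x y] hom_ob[OF f] hom_ob[OF g] by simp
  moreover have "pr2 K Y Y' \<cdot> (prod_ar K f g \<cdot> tup K x y) = g \<cdot> y"
    using assoc[OF xy prod_ar_hom(1)[OF f g] pr2_hom] assoc[OF xy pr2_hom[OF XX'] g]
      prod_ar_hom(3)[OF f g] pr2_tup[OF x y] hom_ob[OF f] hom_ob[OF g] by simp
  ultimately show ?thesis
    using tup_eta[OF _ _ comp_hom[OF xy prod_ar_hom(1)[OF f g]]] hom_ob[OF f] hom_ob[OF g] by metis
qed

lemma prod_ar_comp:
  assumes c: "c \<in> hom K X Y" and a: "a \<in> hom K Y Z" and d: "d \<in> hom K X' Y'" and b: "b \<in> hom K Y' Z'"
  shows "prod_ar K a b \<cdot> prod_ar K c d = prod_ar K (a \<cdot> c) (b \<cdot> d)"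
proof -
  have XX': "X \<in> ob K" "X' \<in> ob K" using c d hom_ob by auto
  have src: "src K c = X" "src K d = X'" "src K (a \<cdot> c) = X" "src K (b \<cdot> d) = X'"
    using c d comp_hom[OF c a] comp_hom[OF d b] homD by blast+
  have "prod_ar K a b \<cdot> prod_ar K c d = tup K (a \<cdot> (c \<cdot> pr1 K X X')) (b \<cdot> (d \<cdot> pr2 K X X'))"
    using prod_ar_tup[OF a b comp_hom[OF pr1_hom[OF XX'] c] comp_hom[OF pr2_hom[OF XX'] d]]
    unfolding prod_ar_def[of K c d] src by simp
  also have "\<dots> = prod_ar K (a \<cdot> c) (b \<cdot> d)"
    unfolding prod_ar_def src using assoc[OF pr1_hom[OF XX'] c a] assoc[OF pr2_hom[OF XX'] d b]
    by simp
  finally show ?thesis .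
qed

lemma P_functor: "is_functor_P K"
  and iota_nat: "nat_trans K id id (Po K) (Pa K) (iota K)"
  and d0_nat_trans: "nat_trans K (Po K) (Pa K) id id (d0 K)"
  and d1_nat_trans: "nat_trans K (Po K) (Pa K) id id (d1 K)"
  and tau_nat: "nat_trans K (Po K) (Pa K) (Po K) (Pa K) (tau K)"
  and nab_nat: "nat_trans K (Po K \<circ> Po K) (Pa K \<circ> Pa K) (Po K) (Pa K) (nab K)"
  using has_paths unfolding path_structure_def by blast+

lemma Po_ob: "X \<in> ob K \<Longrightarrow> Po K X \<in> ob K"
  using P_functor unfolding is_functor_P_def by auto

lemma Pa_hom: "f \<in> hom K X Y \<Longrightarrow> Pa K f \<in> hom K (Po K X) (Po K Y)"
  using P_functor homD unfolding is_functor_P_def by (metis (no_types, lifting))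

lemma iota_hom: "X \<in> ob K \<Longrightarrow> iota K X \<in> hom K X (Po K X)"
  using iota_nat unfolding nat_trans_def by auto

lemma d0_hom: "X \<in> ob K \<Longrightarrow> d0 K X \<in> hom K (Po K X) X"
  using d0_nat_trans unfolding nat_trans_def by auto

lemma d1_hom: "X \<in> ob K \<Longrightarrow> d1 K X \<in> hom K (Po K X) X"
  using d1_nat_trans unfolding nat_trans_def by auto

lemma tau_hom: "X \<in> ob K \<Longrightarrow> tau K X \<in> hom K (Po K X) (Po K X)"
  using tau_nat unfolding nat_trans_def by auto

lemma nab_hom: "X \<in> ob K \<Longrightarrow> nab K X \<in> hom K (Po K (Po K X)) (Po K X)"
  using nab_nat unfolding nat_trans_def by auto

lemma d01_hom: "X \<in> ob K \<Longrightarrow> tup K (d0 K X) (d1 K X) \<in> hom K (Po K X) (prd K X X)"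
  using tup_hom d0_hom d1_hom by blast

lemma d0_natural: "f \<in> hom K X Y \<Longrightarrow> f \<cdot> d0 K X = d0 K Y \<cdot> Pa K f"
  using d0_nat_trans homD unfolding nat_trans_def by fastforce

lemma d1_natural: "f \<in> hom K X Y \<Longrightarrow> f \<cdot> d1 K X = d1 K Y \<cdot> Pa K f"
  using d1_nat_trans homD unfolding nat_trans_def by fastforce

lemma d0_iota: "X \<in> ob K \<Longrightarrow> d0 K X \<cdot> iota K X = idt K X"
  and d1_iota: "X \<in> ob K \<Longrightarrow> d1 K X \<cdot> iota K X = idt K X"
  and d0_tau: "X \<in> ob K \<Longrightarrow> d0 K X \<cdot> tau K X = d1 K X"
  and d1_tau: "X \<in> ob K \<Longrightarrow> d1 K X \<cdot> tau K X = d0 K X"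
  and d0_nab: "X \<in> ob K \<Longrightarrow> d0 K X \<cdot> nab K X = d0 K X \<cdot> d0 K (Po K X)"
  and d1_nab: "X \<in> ob K \<Longrightarrow> d1 K X \<cdot> nab K X = d1 K X \<cdot> d1 K (Po K X)"
  using has_paths unfolding path_structure_def by blast+

lemma fib_comp: "f \<in> fib K \<Longrightarrow> g \<in> fib K \<Longrightarrow> f \<in> hom K X Y \<Longrightarrow> g \<in> hom K Y Z \<Longrightarrow> g \<cdot> f \<in> fib K"
  using P_ax homD unfolding P_axioms_def by metis

lemma weq_comp: "f \<in> weq K \<Longrightarrow> g \<in> weq K \<Longrightarrow> f \<in> hom K X Y \<Longrightarrow> g \<in> hom K Y Z \<Longrightarrow> g \<cdot> f \<in> weq K"
  using P_ax homD unfolding P_axioms_def by metis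

lemma weq_right_cancel:
  "g \<in> weq K \<Longrightarrow> g \<cdot> f \<in> weq K \<Longrightarrow> f \<in> hom K X Y \<Longrightarrow> g \<in> hom K Y Z \<Longrightarrow> f \<in> weq K"
  using P_ax homD unfolding P_axioms_def by metis

lemma trm_fib: "X \<in> ob K \<Longrightarrow> trm K X \<in> fib K"
  and d01_fib: "X \<in> ob K \<Longrightarrow> tup K (d0 K X) (d1 K X) \<in> fib K"
  and d0_weq: "X \<in> ob K \<Longrightarrow> d0 K X \<in> weq K"
  and d1_fib: "X \<in> ob K \<Longrightarrow> d1 K X \<in> fib K"
  and d1_weq: "X \<in> ob K \<Longrightarrow> d1 K X \<in> weq K"
  and Pa_weq: "w \<in> weq K \<Longrightarrow> Pa K w \<in> weq K"
  using P_ax unfolding P_axioms_def by blast+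

lemma pullback_exists: "v \<in> fib K \<Longrightarrow> f \<in> ar K \<Longrightarrow> tgt K f = tgt K v \<Longrightarrow> \<exists>p q. is_pullback K v f p q"
  and pullback_fib: "v \<in> fib K \<Longrightarrow> is_pullback K v f p q \<Longrightarrow> p \<in> fib K"
  and pullback_weq: "v \<in> fib K \<Longrightarrow> f \<in> weq K \<Longrightarrow> is_pullback K v f p q \<Longrightarrow> q \<in> weq K"
  using P_ax unfolding P_axioms_def by (blast, (meson is_pullback_def)+)

lemma path_comparison_fib:
  "v \<in> fib K \<Longrightarrow>
   is_pullback K (tup K (d0 K (tgt K v)) (d1 K (tgt K v))) (prod_ar K v v) p q \<Longrightarrow>
   u \<in> hom K (Po K (src K v)) (src K p) \<Longrightarrow>
   p \<cdot> u = tup K (d0 K (src K v)) (d1 K (src K v)) \<Longrightarrow> q \<cdot> u = Pa K v \<Longrightarrow> u \<in> fib K"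
  using P_ax unfolding P_axioms_def by blast

lemma pullbackD:
  assumes "is_pullback K v f p q"
  shows "p \<in> hom K (src K p) (src K f)" "q \<in> hom K (src K p) (src K v)" "v \<cdot> q = f \<cdot> p"
  using assms unfolding is_pullback_def by auto

lemma pullback_lift:
  assumes "is_pullback K v f p q" "a \<in> hom K Z (src K f)" "b \<in> hom K Z (src K v)" "f \<cdot> a = v \<cdot> b"
  shows "\<exists>u\<in>hom K Z (src K p). p \<cdot> u = a \<and> q \<cdot> u = b"
  using assms hom_ob unfolding is_pullback_def by blast

lemma pullbackI:
  assumes v: "v \<in> hom K Y T" and f: "f \<in> hom K X T" and p: "p \<in> hom K Q X" and q: "q \<in> hom K Q Y"
    and square: "v \<cdot> q = f \<cdot> p"
    and lift: "\<And>Z a b. Z \<in> ob K \<Longrightarrow> a \<in> hom K Z X \<Longrightarrow> b \<in> hom K Z Y \<Longrightarrow> f \<cdot> a = v \<cdot> b \<Longrightarrow>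
      \<exists>u\<in>hom K Z Q. p \<cdot> u = a \<and> q \<cdot> u = b"
    and unique: "\<And>Z u u'. u \<in> hom K Z Q \<Longrightarrow> u' \<in> hom K Z Q \<Longrightarrow>
      p \<cdot> u = p \<cdot> u' \<Longrightarrow> q \<cdot> u = q \<cdot> u' \<Longrightarrow> u = u'"
  shows "is_pullback K v f p q"
proof -
  have src: "src K p = Q" "src K f = X" "src K v = Y" "tgt K f = T" "tgt K v = T"
    using v f p homD by auto
  have "\<exists>!u. u \<in> hom K Z Q \<and> p \<cdot> u = a \<and> q \<cdot> u = b"
    if cone: "Z \<in> ob K" "a \<in> hom K Z X" "b \<in> hom K Z Y" "f \<cdot> a = v \<cdot> b" for Z a b
  proof -
    obtain u where u: "u \<in> hom K Z Q" "p \<cdot> u = a" "q \<cdot> u = b" using lift[OF cone] by blast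
    show ?thesis by (rule ex1I[of _ u]) (use u unique in auto)
  qed
  then show ?thesis
    unfolding is_pullback_def src using v f p q square homD by simp
qed

lemma product_pullback:
  assumes X: "X \<in> ob K" and Y: "Y \<in> ob K"
  shows "is_pullback K (trm K Y) (trm K X) (pr1 K X Y) (pr2 K X Y)"
    and "is_pullback K (trm K X) (trm K Y) (pr2 K X Y) (pr1 K X Y)"
proof -
  have square: "trm K Y \<cdot> pr2 K X Y = trm K X \<cdot> pr1 K X Y"
    using trm_unique[OF comp_hom[OF pr2_hom[OF X Y] trm_hom[OF Y]]]
      trm_unique[OF comp_hom[OF pr1_hom[OF X Y] trm_hom[OF X]]] by simp
  have lift: "\<exists>u\<in>hom K Z (prd K X Y). pr1 K X Y \<cdot> u = a \<and> pr2 K X Y \<cdot> u = b"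
    if "a \<in> hom K Z X" "b \<in> hom K Z Y" for Z a b
    using tup_hom[OF that] pr1_tup[OF that] pr2_tup[OF that] by blast
  show "is_pullback K (trm K Y) (trm K X) (pr1 K X Y) (pr2 K X Y)"
    by (rule pullbackI[OF trm_hom[OF Y] trm_hom[OF X] pr1_hom[OF X Y] pr2_hom[OF X Y] square])
      (rule lift tup_eqI[OF X Y]; assumption)+
  show "is_pullback K (trm K X) (trm K Y) (pr2 K X Y) (pr1 K X Y)"
  proof (rule pullbackI[OF trm_hom[OF X] trm_hom[OF Y] pr2_hom[OF X Y] pr1_hom[OF X Y] square[symmetric]])
    fix Z a b assume "a \<in> hom K Z Y" "b \<in> hom K Z X"
    then show "\<exists>u\<in>hom K Z (prd K X Y). pr2 K X Y \<cdot> u = a \<and> pr1 K X Y \<cdot> u = b"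
      using lift by blast
  qed (rule tup_eqI[OF X Y]; assumption)
qed

lemma pr1_fib: "X \<in> ob K \<Longrightarrow> Y \<in> ob K \<Longrightarrow> pr1 K X Y \<in> fib K"
  and pr2_fib: "X \<in> ob K \<Longrightarrow> Y \<in> ob K \<Longrightarrow> pr2 K X Y \<in> fib K"
  using pullback_fib[OF trm_fib product_pullback(1)] pullback_fib[OF trm_fib product_pullback(2)]
  by blast+

lemma id_prod_ar_weq:
  assumes u: "u \<in> hom K Y Y'" "u \<in> weq K" and Z: "Z \<in> ob K"
  shows "prod_ar K (idt K Z) u \<in> weq K"
proof -
  have YY': "Y \<in> ob K" "Y' \<in> ob K" using u hom_ob by auto
  have iZ: "idt K Z \<in> hom K Z Z" using id_hom Z .
  note iu = prod_ar_hom[OF iZ u(1)]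
  have "is_pullback K (pr2 K Z Y') u (pr2 K Z Y) (prod_ar K (idt K Z) u)"
  proof (rule pullbackI[OF pr2_hom[OF Z YY'(2)] u(1) pr2_hom[OF Z YY'(1)] iu(1) iu(3)])
    fix W a b assume a: "a \<in> hom K W Y" and b: "b \<in> hom K W (prd K Z Y')"
      and ab: "u \<cdot> a = pr2 K Z Y' \<cdot> b"
    have b1: "pr1 K Z Y' \<cdot> b \<in> hom K W Z" using comp_hom[OF b pr1_hom[OF Z YY'(2)]] .
    have "prod_ar K (idt K Z) u \<cdot> tup K (pr1 K Z Y' \<cdot> b) a = b"
      using prod_ar_tup[OF iZ u(1) b1 a] id_left[OF b1] ab tup_eta[OF Z YY'(2) b] by simp
    then show "\<exists>c\<in>hom K W (prd K Z Y). pr2 K Z Y \<cdot> c = a \<and> prod_ar K (idt K Z) u \<cdot> c = b"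
      using tup_hom[OF b1 a] pr2_tup[OF b1 a] by blast
  next
    fix W c c' assume c: "c \<in> hom K W (prd K Z Y)" "c' \<in> hom K W (prd K Z Y)"
      and eq: "pr2 K Z Y \<cdot> c = pr2 K Z Y \<cdot> c'" "prod_ar K (idt K Z) u \<cdot> c = prod_ar K (idt K Z) u \<cdot> c'"
    have "pr1 K Z Y \<cdot> x = pr1 K Z Y' \<cdot> (prod_ar K (idt K Z) u \<cdot> x)" if "x \<in> hom K W (prd K Z Y)" for x
      using assoc[OF that iu(1) pr1_hom[OF Z YY'(2)]] iu(2) id_left[OF pr1_hom[OF Z YY'(1)]] by simp
    then have "pr1 K Z Y \<cdot> c = pr1 K Z Y \<cdot> c'" using c eq(2) by simp
    then show "c = c'" using tup_eqI[OF Z YY'(1) c] eq(1) by blast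
  qed
  then show ?thesis using pullback_weq[OF pr2_fib[OF Z YY'(2)] u(2)] by blast
qed

lemma prod_ar_id_weq:
  assumes u: "u \<in> hom K Y Y'" "u \<in> weq K" and Z: "Z \<in> ob K"
  shows "prod_ar K u (idt K Z) \<in> weq K"
proof -
  have YY': "Y \<in> ob K" "Y' \<in> ob K" using u hom_ob by auto
  have iZ: "idt K Z \<in> hom K Z Z" using id_hom Z .
  note ui = prod_ar_hom[OF u(1) iZ]
  have "is_pullback K (pr1 K Y' Z) u (pr1 K Y Z) (prod_ar K u (idt K Z))"
  proof (rule pullbackI[OF pr1_hom[OF YY'(2) Z] u(1) pr1_hom[OF YY'(1) Z] ui(1) ui(2)])
    fix W a b assume a: "a \<in> hom K W Y" and b: "b \<in> hom K W (prd K Y' Z)"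
      and ab: "u \<cdot> a = pr1 K Y' Z \<cdot> b"
    have b2: "pr2 K Y' Z \<cdot> b \<in> hom K W Z" using comp_hom[OF b pr2_hom[OF YY'(2) Z]] .
    have "prod_ar K u (idt K Z) \<cdot> tup K a (pr2 K Y' Z \<cdot> b) = b"
      using prod_ar_tup[OF u(1) iZ a b2] id_left[OF b2] ab tup_eta[OF YY'(2) Z b] by simp
    then show "\<exists>c\<in>hom K W (prd K Y Z). pr1 K Y Z \<cdot> c = a \<and> prod_ar K u (idt K Z) \<cdot> c = b"
      using tup_hom[OF a b2] pr1_tup[OF a b2] by blast
  next
    fix W c c' assume c: "c \<in> hom K W (prd K Y Z)" "c' \<in> hom K W (prd K Y Z)"
      and eq: "pr1 K Y Z \<cdot> c = pr1 K Y Z \<cdot> c'" "prod_ar K u (idt K Z) \<cdot> c = prod_ar K u (idt K Z) \<cdot> c'"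
    have "pr2 K Y Z \<cdot> x = pr2 K Y' Z \<cdot> (prod_ar K u (idt K Z) \<cdot> x)" if "x \<in> hom K W (prd K Y Z)" for x
      using assoc[OF that ui(1) pr2_hom[OF YY'(2) Z]] ui(3) id_left[OF pr2_hom[OF YY'(1) Z]] by simp
    then have "pr2 K Y Z \<cdot> c = pr2 K Y Z \<cdot> c'" using c eq(2) by simp
    then show "c = c'" using tup_eqI[OF YY'(1) Z c] eq(1) by blast
  qed
  then show ?thesis using pullback_weq[OF pr1_fib[OF YY'(2) Z] u(2)] by blast
qed

lemma prod_ar_weq:
  assumes t: "t \<in> hom K E B" "t \<in> weq K"
  shows "prod_ar K t t \<in> weq K"
proof -
  have EB: "E \<in> ob K" "B \<in> ob K" using t hom_ob by auto
  have iE: "idt K E \<in> hom K E E" and iB: "idt K B \<in> hom K B B" using id_hom EB by auto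
  have "prod_ar K t (idt K B) \<cdot> prod_ar K (idt K E) t = prod_ar K t t"
    using prod_ar_comp[OF iE t(1) t(1) iB] id_left[OF t(1)] id_right[OF t(1)] by simp
  moreover have "prod_ar K t (idt K B) \<cdot> prod_ar K (idt K E) t \<in> weq K"
    using weq_comp[OF id_prod_ar_weq[OF t EB(1)] prod_ar_id_weq[OF t EB(2)]
        prod_ar_hom(1)[OF iE t(1)] prod_ar_hom(1)[OF t(1) iB]] .
  ultimately show ?thesis by simp
qed

section \<open>The homotopy relation\<close>

lemma htpy_relI:
  "f \<in> hom K C X \<Longrightarrow> g \<in> hom K C X \<Longrightarrow> h \<in> hom K C (Po K X) \<Longrightarrow>
   d0 K X \<cdot> h = f \<Longrightarrow> d1 K X \<cdot> h = g \<Longrightarrow> (f, g) \<in> htpy_rel K C X"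
  unfolding htpy_rel_def by blast

lemma htpy_relE:
  assumes "(f, g) \<in> htpy_rel K C X"
  obtains h where "f \<in> hom K C X" "g \<in> hom K C X" "h \<in> hom K C (Po K X)"
    "d0 K X \<cdot> h = f" "d1 K X \<cdot> h = g"
  using assms unfolding htpy_rel_def by blast

lemma htpy_rel_comp_left:
  assumes fg: "(f, g) \<in> htpy_rel K C X" and v: "v \<in> hom K X Y"
  shows "(v \<cdot> f, v \<cdot> g) \<in> htpy_rel K C Y"
proof -
  obtain h where f: "f \<in> hom K C X" and g: "g \<in> hom K C X" and h: "h \<in> hom K C (Po K X)"
    and h0: "d0 K X \<cdot> h = f" and h1: "d1 K X \<cdot> h = g"
    using fg by (rule htpy_relE)
  have XY: "X \<in> ob K" "Y \<in> ob K" using v hom_ob by auto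
  have Pv: "Pa K v \<in> hom K (Po K X) (Po K Y)" using Pa_hom[OF v] .
  have "d0 K Y \<cdot> (Pa K v \<cdot> h) = v \<cdot> f"
    using assoc[OF h Pv d0_hom[OF XY(2)]] d0_natural[OF v] assoc[OF h d0_hom[OF XY(1)] v] h0 by simp
  moreover have "d1 K Y \<cdot> (Pa K v \<cdot> h) = v \<cdot> g"
    using assoc[OF h Pv d1_hom[OF XY(2)]] d1_natural[OF v] assoc[OF h d1_hom[OF XY(1)] v] h1 by simp
  ultimately show ?thesis
    using htpy_relI[OF comp_hom[OF f v] comp_hom[OF g v] comp_hom[OF h Pv]] by blast
qed

lemma htpy_rel_comp_right:
  assumes fg: "(f, g) \<in> htpy_rel K X Y" and e: "e \<in> hom K C X"
  shows "(f \<cdot> e, g \<cdot> e) \<in> htpy_rel K C Y"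
proof -
  obtain h where f: "f \<in> hom K X Y" and g: "g \<in> hom K X Y" and h: "h \<in> hom K X (Po K Y)"
    and h0: "d0 K Y \<cdot> h = f" and h1: "d1 K Y \<cdot> h = g"
    using fg by (rule htpy_relE)
  have Y: "Y \<in> ob K" using f hom_ob by auto
  show ?thesis
    using htpy_relI[OF comp_hom[OF e f] comp_hom[OF e g] comp_hom[OF e h]]
      assoc[OF e h d0_hom[OF Y]] assoc[OF e h d1_hom[OF Y]] h0 h1 by simp
qed

text \<open>The map u is a fibration by (P5), and a weak equivalence by 2-out-of-3 since both
  q u = P(t) and the pullback projection q are.\<close>
lemma path_comparison_trivial_fib:
  assumes t: "t \<in> fib K" "t \<in> weq K" "t \<in> hom K E B"
    and pb: "is_pullback K (tup K (d0 K B) (d1 K B)) (prod_ar K t t) p q"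
  shows "\<exists>u\<in>hom K (Po K E) (src K p). u \<in> fib K \<and> u \<in> weq K
           \<and> p \<cdot> u = tup K (d0 K E) (d1 K E) \<and> q \<cdot> u = Pa K t"
proof -
  have EB: "E \<in> ob K" "B \<in> ob K" and st: "src K t = E" "tgt K t = B"
    using t(3) hom_ob homD by auto
  have tt: "prod_ar K t t \<in> hom K (prd K E E) (prd K B B)" using prod_ar_hom(1)[OF t(3) t(3)] .
  have src: "src K (prod_ar K t t) = prd K E E" "src K (tup K (d0 K B) (d1 K B)) = Po K B"
    using tt d01_hom[OF EB(2)] homD by auto
  have qh: "q \<in> hom K (src K p) (Po K B)" using pullbackD(2)[OF pb] src by simp
  have Pt: "Pa K t \<in> hom K (Po K E) (Po K B)" using Pa_hom[OF t(3)] .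
  have "prod_ar K t t \<cdot> tup K (d0 K E) (d1 K E) = tup K (t \<cdot> d0 K E) (t \<cdot> d1 K E)"
    using prod_ar_tup[OF t(3) t(3) d0_hom[OF EB(1)] d1_hom[OF EB(1)]] .
  also have "\<dots> = tup K (d0 K B) (d1 K B) \<cdot> Pa K t"
    using d0_natural[OF t(3)] d1_natural[OF t(3)] tup_comp[OF d0_hom[OF EB(2)] d1_hom[OF EB(2)] Pt]
    by simp
  finally obtain u where u: "u \<in> hom K (Po K E) (src K p)"
    "p \<cdot> u = tup K (d0 K E) (d1 K E)" "q \<cdot> u = Pa K t"
    using pullback_lift[OF pb _ Pt[folded src(2)]] d01_hom[OF EB(1)] src by fastforce
  have "u \<in> fib K" using path_comparison_fib[OF t(1)] pb u st by simp
  moreover have "q \<in> weq K" using pullback_weq[OF d01_fib[OF EB(2)] prod_ar_weq[OF t(3,2)] pb] .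
  then have "u \<in> weq K" using weq_right_cancel[OF _ _ u(1) qh] u(3) Pa_weq[OF t(2)] by simp
  ultimately show ?thesis using u by blast
qed

lemma trivial_fib_reflects_htpy:
  assumes C: "cofibrant K C" and t: "t \<in> fib K" "t \<in> weq K" "t \<in> hom K E B"
    and x: "x \<in> hom K C E" and y: "y \<in> hom K C E"
    and txy: "(t \<cdot> x, t \<cdot> y) \<in> htpy_rel K C B"
  shows "(x, y) \<in> htpy_rel K C E"
proof -
  have EB: "E \<in> ob K" "B \<in> ob K" using t(3) hom_ob by auto
  obtain \<gamma> where \<gamma>: "\<gamma> \<in> hom K C (Po K B)" and \<gamma>0: "d0 K B \<cdot> \<gamma> = t \<cdot> x" and \<gamma>1: "d1 K B \<cdot> \<gamma> = t \<cdot> y"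
    using txy by (rule htpy_relE)
  have tt: "prod_ar K t t \<in> hom K (prd K E E) (prd K B B)" using prod_ar_hom(1)[OF t(3) t(3)] .
  obtain p q where pb: "is_pullback K (tup K (d0 K B) (d1 K B)) (prod_ar K t t) p q"
    using pullback_exists[OF d01_fib[OF EB(2)]] tt d01_hom[OF EB(2)] homD by metis
  have src: "src K (prod_ar K t t) = prd K E E" "src K (tup K (d0 K B) (d1 K B)) = Po K B"
    using tt d01_hom[OF EB(2)] homD by auto
  have ph: "p \<in> hom K (src K p) (prd K E E)" using pullbackD(1)[OF pb] src by simp
  obtain u where u: "u \<in> hom K (Po K E) (src K p)" "u \<in> fib K" "u \<in> weq K"
    "p \<cdot> u = tup K (d0 K E) (d1 K E)"
    using path_comparison_trivial_fib[OF t pb] by blast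
  have "prod_ar K t t \<cdot> tup K x y = tup K (d0 K B) (d1 K B) \<cdot> \<gamma>"
    using prod_ar_tup[OF t(3) t(3) x y] tup_comp[OF d0_hom[OF EB(2)] d1_hom[OF EB(2)] \<gamma>] \<gamma>0 \<gamma>1
    by simp
  then obtain r where r: "r \<in> hom K C (src K p)" "p \<cdot> r = tup K x y"
    using pullback_lift[OF pb _ \<gamma>[folded src(2)]] tup_hom[OF x y] src by fastforce
  obtain H where H: "H \<in> hom K C (Po K E)" "u \<cdot> H = r"
    using C u(1-3) r(1) unfolding cofibrant_def by blast
  have "tup K (d0 K E \<cdot> H) (d1 K E \<cdot> H) = tup K x y"
    using tup_comp[OF d0_hom[OF EB(1)] d1_hom[OF EB(1)] H(1)] assoc[OF H(1) u(1) ph] u(4) H(2) r(2)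
    by simp
  then have "d0 K E \<cdot> H = x" "d1 K E \<cdot> H = y"
    using tup_inject[OF comp_hom[OF H(1) d0_hom[OF EB(1)]] comp_hom[OF H(1) d1_hom[OF EB(1)]] x y]
    by blast+
  then show ?thesis using htpy_relI[OF x y H(1)] by blast
qed

text \<open>Transitivity: two composable homotopies h, k are first assembled into a
  homotopy of homotopies from h to the constant path at the endpoint (lifting along
  the trivial fibration d1), which the folding map then flattens.\<close>
lemma htpy_rel_equiv:
  assumes C: "cofibrant K C" and X: "X \<in> ob K"
  shows "equiv (hom K C X) (htpy_rel K C X)"
proof (rule equivI)
  show "htpy_rel K C X \<subseteq> hom K C X \<times> hom K C X" unfolding htpy_rel_def by auto
  have i: "iota K X \<in> hom K X (Po K X)" using iota_hom[OF X] .
  have const_htpy: "iota K X \<cdot> f \<in> hom K C (Po K X) \<and> d0 K X \<cdot> (iota K X \<cdot> f) = f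
      \<and> d1 K X \<cdot> (iota K X \<cdot> f) = f" if f: "f \<in> hom K C X" for f
    using comp_hom[OF f i] assoc[OF f i d0_hom[OF X]] assoc[OF f i d1_hom[OF X]]
      d0_iota[OF X] d1_iota[OF X] id_left[OF f] by simp
  show "refl_on (hom K C X) (htpy_rel K C X)"
    unfolding refl_on_def using const_htpy htpy_relI by meson
  show "sym (htpy_rel K C X)"
  proof (rule symI)
    fix f g assume "(f, g) \<in> htpy_rel K C X"
    then obtain h where f: "f \<in> hom K C X" and g: "g \<in> hom K C X" and h: "h \<in> hom K C (Po K X)"
      and h0: "d0 K X \<cdot> h = f" and h1: "d1 K X \<cdot> h = g"
      by (rule htpy_relE)
    have t: "tau K X \<in> hom K (Po K X) (Po K X)" using tau_hom[OF X] .
    show "(g, f) \<in> htpy_rel K C X"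
      using htpy_relI[OF g f comp_hom[OF h t]] assoc[OF h t d0_hom[OF X]] assoc[OF h t d1_hom[OF X]]
        d0_tau[OF X] d1_tau[OF X] h0 h1 by simp
  qed
  show "trans (htpy_rel K C X)"
  proof (rule transI)
    fix f g l assume fg: "(f, g) \<in> htpy_rel K C X" and gl: "(g, l) \<in> htpy_rel K C X"
    obtain h where f: "f \<in> hom K C X" and h: "h \<in> hom K C (Po K X)"
      and h0: "d0 K X \<cdot> h = f" and h1: "d1 K X \<cdot> h = g"
      using fg by (rule htpy_relE)
    have l: "l \<in> hom K C X" using gl by (rule htpy_relE)
    have PX: "Po K X \<in> ob K" using Po_ob[OF X] .
    have "(d1 K X \<cdot> h, d1 K X \<cdot> (iota K X \<cdot> l)) \<in> htpy_rel K C X"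
      using gl h1 const_htpy[OF l] by simp
    then obtain H where H: "H \<in> hom K C (Po K (Po K X))"
      and H0: "d0 K (Po K X) \<cdot> H = h" and H1: "d1 K (Po K X) \<cdot> H = iota K X \<cdot> l"
      using trivial_fib_reflects_htpy[OF C d1_fib[OF X] d1_weq[OF X] d1_hom[OF X] h]
        const_htpy[OF l] by (blast elim: htpy_relE)
    have n: "nab K X \<in> hom K (Po K (Po K X)) (Po K X)" using nab_hom[OF X] .
    have "d0 K X \<cdot> (nab K X \<cdot> H) = f"
      using assoc[OF H n d0_hom[OF X]] d0_nab[OF X] assoc[OF H d0_hom[OF PX] d0_hom[OF X]] H0 h0
      by simp
    moreover have "d1 K X \<cdot> (nab K X \<cdot> H) = l"
      using assoc[OF H n d1_hom[OF X]] d1_nab[OF X] assoc[OF H d1_hom[OF PX] d1_hom[OF X]] H1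
        const_htpy[OF l] by simp
    ultimately show "(f, l) \<in> htpy_rel K C X" using htpy_relI[OF f l comp_hom[OF H n]] by blast
  qed
qed

section \<open>Weak equivalences out of a cofibrant object\<close>

text \<open>The mapping path space of w: the pullback R of (d0, d1) : P(B) \<rightarrow> B \<times> B along
  1 \<times> w : B \<times> A \<rightarrow> B \<times> B, with t and \<pi> the two coordinates B and A.\<close>
lemma weq_mapping_path_factorization:
  assumes w: "w \<in> weq K" "w \<in> hom K A B"
  obtains R t \<pi> s where "t \<in> hom K R B" "t \<in> fib K" "t \<in> weq K" "\<pi> \<in> hom K R A"
    "(t, w \<cdot> \<pi>) \<in> htpy_rel K R B" "s \<in> hom K A R" "\<pi> \<cdot> s = idt K A" "t \<cdot> s = w"
proof -
  have AB: "A \<in> ob K" "B \<in> ob K" using w(2) hom_ob by auto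
  let ?v = "tup K (d0 K B) (d1 K B)" and ?f = "prod_ar K (idt K B) w"
  have iB: "idt K B \<in> hom K B B" using id_hom[OF AB(2)] .
  have vh: "?v \<in> hom K (Po K B) (prd K B B)" using d01_hom[OF AB(2)] .
  note fh = prod_ar_hom[OF iB w(2)]
  obtain p q where pb: "is_pullback K ?v ?f p q"
    using pullback_exists[OF d01_fib[OF AB(2)]] fh(1) vh homD by metis
  define R where "R = src K p"
  have src: "src K ?f = prd K B A" "src K ?v = Po K B" using fh(1) vh homD by auto
  have ph: "p \<in> hom K R (prd K B A)" and qh: "q \<in> hom K R (Po K B)"
    using pullbackD[OF pb] src R_def by auto
  have sq: "?v \<cdot> q = ?f \<cdot> p" using pullbackD(3)[OF pb] .
  have p1: "pr1 K B A \<in> hom K (prd K B A) B" and p2: "pr2 K B A \<in> hom K (prd K B A) A"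
    using pr1_hom pr2_hom AB by auto
  have p1': "pr1 K B B \<in> hom K (prd K B B) B" and p2': "pr2 K B B \<in> hom K (prd K B B) B"
    using pr1_hom pr2_hom AB by auto
  define t \<pi> where "t = pr1 K B A \<cdot> p" and "\<pi> = pr2 K B A \<cdot> p"
  have th: "t \<in> hom K R B" and \<pi>h: "\<pi> \<in> hom K R A"
    unfolding t_def \<pi>_def using comp_hom ph p1 p2 by blast+
  have d0q: "d0 K B \<cdot> q = t"
  proof -
    have "d0 K B \<cdot> q = pr1 K B B \<cdot> (?v \<cdot> q)"
      using assoc[OF qh vh p1'] pr1_tup[OF d0_hom[OF AB(2)] d1_hom[OF AB(2)]] by simp
    also have "\<dots> = t"
      using sq assoc[OF ph fh(1) p1'] fh(2) id_left[OF p1] t_def by simp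
    finally show ?thesis .
  qed
  have d1q: "d1 K B \<cdot> q = w \<cdot> \<pi>"
  proof -
    have "d1 K B \<cdot> q = pr2 K B B \<cdot> (?v \<cdot> q)"
      using assoc[OF qh vh p2'] pr2_tup[OF d0_hom[OF AB(2)] d1_hom[OF AB(2)]] by simp
    also have "\<dots> = w \<cdot> \<pi>"
      using sq assoc[OF ph fh(1) p2'] fh(3) assoc[OF ph p2 w(2)] \<pi>_def by simp
    finally show ?thesis .
  qed
  have "t \<in> fib K"
    unfolding t_def using fib_comp[OF pullback_fib[OF d01_fib[OF AB(2)] pb] pr1_fib[OF AB(2,1)] ph p1] .
  moreover have "t \<in> weq K"
    using weq_comp[OF pullback_weq[OF d01_fib[OF AB(2)] id_prod_ar_weq[OF w(2,1) AB(2)] pb]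
        d0_weq[OF AB(2)] qh d0_hom[OF AB(2)]] d0q by simp
  moreover have "(t, w \<cdot> \<pi>) \<in> htpy_rel K R B"
    using htpy_relI[OF th comp_hom[OF \<pi>h w(2)] qh d0q d1q] .
  moreover obtain s where s: "s \<in> hom K A R" "p \<cdot> s = tup K w (idt K A)"
  proof -
    have iA: "idt K A \<in> hom K A A" using id_hom[OF AB(1)] .
    have i: "iota K B \<in> hom K B (Po K B)" using iota_hom[OF AB(2)] .
    have "?f \<cdot> tup K w (idt K A) = tup K w w"
      using prod_ar_tup[OF iB w(2) w(2) iA] id_left[OF w(2)] id_right[OF w(2)] by simp
    also have "\<dots> = ?v \<cdot> (iota K B \<cdot> w)"
      using tup_comp[OF d0_hom[OF AB(2)] d1_hom[OF AB(2)] comp_hom[OF w(2) i]]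
        assoc[OF w(2) i d0_hom[OF AB(2)]] assoc[OF w(2) i d1_hom[OF AB(2)]]
        d0_iota[OF AB(2)] d1_iota[OF AB(2)] id_left[OF w(2)] by simp
    finally show ?thesis
      using pullback_lift[OF pb _ comp_hom[OF w(2) i[folded src(2)]]] tup_hom[OF w(2) iA] src
        that R_def by fastforce
  qed
  moreover have "\<pi> \<cdot> s = idt K A" and "t \<cdot> s = w"
    unfolding \<pi>_def t_def
    using assoc[OF s(1) ph p2] assoc[OF s(1) ph p1] s(2)
      pr1_tup[OF w(2) id_hom[OF AB(1)]] pr2_tup[OF w(2) id_hom[OF AB(1)]] by simp_all
  ultimately show ?thesis using that th \<pi>h by blast
qed

lemma weq_htpy_surj:
  assumes C: "cofibrant K C" and w: "w \<in> weq K" "w \<in> hom K A B" and g: "g \<in> hom K C B"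
  shows "\<exists>a\<in>hom K C A. (w \<cdot> a, g) \<in> htpy_rel K C B"
proof -
  obtain R t \<pi> s where t: "t \<in> hom K R B" "t \<in> fib K" "t \<in> weq K" and \<pi>: "\<pi> \<in> hom K R A"
    and htpy: "(t, w \<cdot> \<pi>) \<in> htpy_rel K R B"
    using weq_mapping_path_factorization[OF w] .
  obtain e where e: "e \<in> hom K C R" "t \<cdot> e = g"
    using C t unfolding cofibrant_def by (metis g)
  have "(g, w \<cdot> (\<pi> \<cdot> e)) \<in> htpy_rel K C B"
    using htpy_rel_comp_right[OF htpy e(1)] e(2) assoc[OF e(1) \<pi> w(2)] by simp
  then have "(w \<cdot> (\<pi> \<cdot> e), g) \<in> htpy_rel K C B"
    using htpy_rel_equiv[OF C] hom_ob[OF w(2)] by (meson equivE symD)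
  then show ?thesis using comp_hom[OF e(1) \<pi>] by blast
qed

lemma weq_reflects_htpy:
  assumes C: "cofibrant K C" and w: "w \<in> weq K" "w \<in> hom K A B"
    and f: "f \<in> hom K C A" and f': "f' \<in> hom K C A"
    and wf: "(w \<cdot> f, w \<cdot> f') \<in> htpy_rel K C B"
  shows "(f, f') \<in> htpy_rel K C A"
proof -
  obtain R t \<pi> s where t: "t \<in> hom K R B" "t \<in> fib K" "t \<in> weq K" and \<pi>: "\<pi> \<in> hom K R A"
    and s: "s \<in> hom K A R" "\<pi> \<cdot> s = idt K A" "t \<cdot> s = w"
    using weq_mapping_path_factorization[OF w] .
  have "t \<cdot> (s \<cdot> x) = w \<cdot> x" if "x \<in> hom K C A" for x
    using assoc[OF that s(1) t(1)] s(3) by simp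
  then have "(s \<cdot> f, s \<cdot> f') \<in> htpy_rel K C R"
    using trivial_fib_reflects_htpy[OF C t(2,3,1) comp_hom[OF f s(1)] comp_hom[OF f' s(1)]] wf f f'
    by simp
  then have "(\<pi> \<cdot> (s \<cdot> f), \<pi> \<cdot> (s \<cdot> f')) \<in> htpy_rel K C A"
    using htpy_rel_comp_left[OF _ \<pi>] by blast
  then show ?thesis
    using assoc[OF f s(1) \<pi>] assoc[OF f' s(1) \<pi>] s(2) id_left[OF f] id_left[OF f'] by simp
qed

end

theorem proposition2p23:
  fixes K :: "('o, 'a) pcat" and C A B :: 'o and w :: 'a
  assumes "P_category K"
    and "cofibrant K C"
    and "w \<in> weq K" and "w \<in> hom K A B"
  shows "\<exists>F. bij_betw F (htpy_classes K C A) (htpy_classes K C B)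
           \<and> (\<forall>f\<in>hom K C A. F (htpy_rel K C A `` {f}) = htpy_rel K C B `` {cmp K w f})"
proof -
  interpret p_category K using assms(1) by unfold_locales
  have AB: "A \<in> ob K" "B \<in> ob K" using assms(4) hom_ob by auto
  show ?thesis
    unfolding htpy_classes_def
  proof (rule bij_betw_quotients_induced)
    show "equiv (hom K C A) (htpy_rel K C A)" "equiv (hom K C B) (htpy_rel K C B)"
      using htpy_rel_equiv[OF assms(2)] AB by auto
    show "\<And>f. f \<in> hom K C A \<Longrightarrow> w \<cdot> f \<in> hom K C B" using comp_hom assms(4) by blast
    show "(w \<cdot> f, w \<cdot> f') \<in> htpy_rel K C B \<longleftrightarrow> (f, f') \<in> htpy_rel K C A"
      if "f \<in> hom K C A" "f' \<in> hom K C A" for f f'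
      using weq_reflects_htpy[OF assms(2-4) that] htpy_rel_comp_left[OF _ assms(4)] by blast
    show "\<And>g. g \<in> hom K C B \<Longrightarrow> \<exists>f\<in>hom K C A. (w \<cdot> f, g) \<in> htpy_rel K C B"
      using weq_htpy_surj[OF assms(2-4)] .
  qed
qed

end
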